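(* For every $m\geq1$ and every $i\in\{1,\dots,N\}$, $$C^{(2m+1)}_{ii}\cdot v=\lambda_i\, C^{(2m)}_{ii}\cdot v-G_i\,C^{(2m)}_{-i,i}\cdot v.$$
   Context: Let $N\geq1$, $I=\{-N,\dots,-1,1,\dots,N\}$, and for $k\in I$ put $\bar k=0$ if $k>0$, $\bar k=1$ if $k<0$. The Lie superalgebra $\mathfrak{q}(N)$ over $\mathbb{C}$ is spanned by elements $F_{ij}$ ($i,j\in I$) with $F_{-i,-j}=F_{ij}$ (realized as $F_{ij}=E_{ij}+E_{-i,-j}\in\mathfrak{gl}(N|N)$), $F_{ij}$ of parity $\bar\imath+\bar\jmath\bmod 2$, and supercommutator $$[F_{ij}, F_{kl}] = \delta_{kj} F_{il} - (-1)^{(\bar{\imath}+ \bar{\jmath})(\bar{k} + \bar{l})} \delta_{il} F_{kj} + \delta_{k,-j} F_{-i,l} - (-1)^{(\bar{\imath} + \bar{\jmath})(\bar{k} + \bar{l})} \delta_{-i,l} F_{k,-j}.$$ For $n\geq1$ define $C^{(n)}_{ij}\in U(\mathfrak{q}(N))$ by $$C^{(n)}_{ij} = \sum_{k_1,\ldots,k_{n-1}\in I}F_{ik_1} (-1)^{\bar{k}_1} F_{k_1k_2} (-1)^{\bar{k}_2} \cdots F_{k_{n-2}k_{n-1}} (-1)^{\bar{k}_{n-1}} F_{k_{n-1}j}$$ (so $C^{(1)}_{ij}=F_{ij}$). For $i>0$ let $G_i=F_{-i,i}$ $(=F_{i,-i})$. Let $V$ be a representation of $\mathfrak{q}(N)$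 and $v\in V$ a vector such that $F_{ij}\cdot v=0$ whenever $|i|<|j|$, and $F_{ii}\cdot v=\lambda_i v$ for $i=1,\dots,N$, where $\lambda_1,\dots,\lambda_N\in\mathbb{C}$. *)

theory Defs
  imports Complex_Main
begin

definition Iset :: "nat \<Rightarrow> int set" where
  "Iset N = {k. k \<noteq> 0 \<and> \<bar>k\<bar> \<le> int N}"

definition par :: "int \<Rightarrow> nat" where
  "par k = (if k < 0 then 1 else 0)"

text \<open>The operator relations saying that the family F i j (i,j in I) of linear
  maps on the complex vector space V (scalar multiplication sc) is a representation
  of the Lie superalgebra q(N), F i j being the action of the element F_ij.\<close>
definition is_qN_rep :: "nat \<Rightarrow> (complex \<Rightarrow> 'v::ab_group_add \<Rightarrow> 'v) \<Rightarrow> (int \<Rightarrow> int \<Rightarrow> 'v \<Rightarrow> 'v) \<Rightarrow> bool" where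
  "is_qN_rep N sc F \<longleftrightarrow>
     vector_space sc \<and>
     (\<forall>i\<in>Iset N. \<forall>j\<in>Iset N. Vector_Spaces.linear sc sc (F i j)) \<and>
     (\<forall>i\<in>Iset N. \<forall>j\<in>Iset N. F (-i) (-j) = F i j) \<and>
     (\<forall>i\<in>Iset N. \<forall>j\<in>Iset N. \<forall>k\<in>Iset N. \<forall>l\<in>Iset N. \<forall>x.
        let s = (-1::complex) ^ ((par i + par j) * (par k + par l)) in
        F i j (F k l x) - sc s (F k l (F i j x)) =
          (if k = j then F i l x else 0)
          - sc s (if i = l then F k j x else 0)
          + (if k = -j then F (-i) l x else 0)
          - sc s (if -i = l then F k (-j) x else 0))"

text \<open>Action of C^{(n)}_{ij} (n >= 1):
  C^{(1)}_{ij} = F_ij,  C^{(n+1)}_{ij} = sum_k F_{ik} (-1)^{bar k} C^{(n)}_{kj}.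
  The value at n = 0 is junk and never used.\<close>
fun Cop :: "nat \<Rightarrow> (complex \<Rightarrow> 'v::ab_group_add \<Rightarrow> 'v) \<Rightarrow> (int \<Rightarrow> int \<Rightarrow> 'v \<Rightarrow> 'v)
              \<Rightarrow> nat \<Rightarrow> int \<Rightarrow> int \<Rightarrow> 'v \<Rightarrow> 'v" where
  "Cop N sc F 0 i j x = 0"
| "Cop N sc F (Suc 0) i j x = F i j x"
| "Cop N sc F (Suc (Suc n)) i j x =
     (\<Sum>k\<in>Iset N. F i k (sc ((-1) ^ par k) (Cop N sc F (Suc n) k j x)))"

end

theory Submission
  imports Defs
begin

(*
  The operators C^(n)_cd transform under the adjoint action of q(N) exactly like the
  generators F_cd: the bracket [F_ab, C^(n)_cd] is given by the defining relation of q(N)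
  with C^(n) in place of F, since C^(n+1) is the signed matrix product of F with C^(n).
  On the highest weight vector v this gives C_ab v = 0 for |a| < |b|, and in the expansion
  C^(2m+1)_ii v = sum_k F_ik (-1)^(bar k) C^(2m)_ki v the summand k = i is lambda_i C_ii v,
  the summand k = -i is -G_i C_-i,i v, the summands with |k| < i vanish, and, since
  F_ik v = 0, the commutation relation turns those with |k| > i into
  (-1)^(bar k) C_ii v - C_kk v. As C^(n)_-k,-k = (-1)^(n-1) C^(n)_kk, for
  n = 2m the latter are odd in k and cancel in pairs.
*)

definition par_sign :: "int \<Rightarrow> complex" where
  "par_sign k = (-1) ^ par k"

definition comm_sign :: "int \<Rightarrow> int \<Rightarrow> int \<Rightarrow> int \<Rightarrow> complex" where
  "comm_sign a b c d = (-1) ^ ((par a + par b) * (par c + par d))"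

lemma par_sign_pos: "k > 0 \<Longrightarrow> par_sign k = 1"
  by (simp add: par_sign_def par_def)

lemma par_sign_uminus: "k \<noteq> 0 \<Longrightarrow> par_sign (-k) = - par_sign k"
  by (simp add: par_sign_def par_def)

lemma par_sign_mult_self: "par_sign k * par_sign k = 1"
  by (simp add: par_sign_def par_def)

lemma comm_sign_mult: "comm_sign a b c k * comm_sign a b k d = comm_sign a b c d"
  by (auto simp: comm_sign_def par_def)

lemma comm_sign_same: "comm_sign a a c d = 1"
  by (simp add: comm_sign_def)

lemma comm_sign_swap: "comm_sign a b b a = par_sign a * par_sign b"
  by (auto simp: comm_sign_def par_sign_def par_def)

lemma comm_sign_par_sign_flip:
  assumes "a \<noteq> 0" "b \<noteq> 0"
  shows "comm_sign a b c a * par_sign a = comm_sign a b c b * par_sign b"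
    and "comm_sign a b c (-a) * par_sign (-a) = comm_sign a b c (-b) * par_sign (-b)"
  using assms by (auto simp: comm_sign_def par_sign_def par_def)

lemma Iset_uminus_iff [simp]: "-k \<in> Iset N \<longleftrightarrow> k \<in> Iset N"
  by (auto simp: Iset_def)

lemma Iset_nonzero: "k \<in> Iset N \<Longrightarrow> k \<noteq> 0"
  by (simp add: Iset_def)

lemma finite_Iset [simp]: "finite (Iset N)"
  by (rule finite_subset[of _ "{-int N..int N}"]) (auto simp: Iset_def)

lemma sum_Iset_reflect: "(\<Sum>k\<in>Iset N. g k) = (\<Sum>k\<in>Iset N. g (-k))"
  by (rule sum.reindex_bij_witness[of _ uminus uminus]) auto

lemma sum_Iset_odd:
  fixes g :: "int \<Rightarrow> 'a::ab_group_add"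
  assumes "\<And>k. k \<in> Iset N \<Longrightarrow> g (-k) = - g k"
  shows "(\<Sum>k\<in>Iset N. g k) = 0"
proof -
  have split: "Iset N = {1..int N} \<union> uminus ` {1..int N}"
    by (auto simp: Iset_def image_iff intro: bexI[of _ "- _"])
  have "(\<Sum>k\<in>Iset N. g k) = (\<Sum>k=1..int N. g k) + sum g (uminus ` {1..int N})"
    unfolding split by (rule sum.union_disjoint) auto
  also have "sum g (uminus ` {1..int N}) = (\<Sum>k=1..int N. g (-k))"
    by (subst sum.reindex) auto
  also have "(\<Sum>k=1..int N. g k) + (\<Sum>k=1..int N. g (-k)) = 0"
    using assms by (simp add: Iset_def sum_negf)
  finally show ?thesis .
qed

locale qN_representation =
  fixes N :: nat and sc :: "complex \<Rightarrow> 'v::ab_group_add \<Rightarrow> 'v" and F :: "int \<Rightarrow> int \<Rightarrow> 'v \<Rightarrow> 'v"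
  assumes qN_rep: "is_qN_rep N sc F"
begin

sublocale vs: vector_space sc
  using qN_rep by (simp add: is_qN_rep_def)

lemma F_module_hom: "a \<in> Iset N \<Longrightarrow> b \<in> Iset N \<Longrightarrow> module_hom sc sc (F a b)"
  using qN_rep by (simp add: is_qN_rep_def module_hom_iff_linear)

lemmas F_add = module_hom.add[OF F_module_hom]
  and F_diff = module_hom.diff[OF F_module_hom]
  and F_neg = module_hom.neg[OF F_module_hom]
  and F_zero = module_hom.zero[OF F_module_hom]
  and F_scale = module_hom.scale[OF F_module_hom]
  and F_sum = module_hom.sum[OF F_module_hom]

lemma F_uminus_uminus: "a \<in> Iset N \<Longrightarrow> b \<in> Iset N \<Longrightarrow> F (-a) (-b) = F a b"
  using qN_rep by (simp add: is_qN_rep_def)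

(* The right-hand side of the defining relation for [F_ab, F_cd], with X in place of F. *)
definition ad_terms :: "(int \<Rightarrow> int \<Rightarrow> 'v \<Rightarrow> 'v) \<Rightarrow> int \<Rightarrow> int \<Rightarrow> int \<Rightarrow> int \<Rightarrow> 'v \<Rightarrow> 'v" where
  "ad_terms X a b c d x =
     (if c = b then X a d x else 0) - sc (comm_sign a b c d) (if a = d then X c b x else 0)
     + (if c = -b then X (-a) d x else 0) - sc (comm_sign a b c d) (if -a = d then X c (-b) x else 0)"

definition ad_covariant :: "(int \<Rightarrow> int \<Rightarrow> 'v \<Rightarrow> 'v) \<Rightarrow> bool" where
  "ad_covariant X \<longleftrightarrow> (\<forall>a\<in>Iset N. \<forall>b\<in>Iset N. \<forall>c\<in>Iset N. \<forall>d\<in>Iset N. \<forall>x.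
     F a b (X c d x) = sc (comm_sign a b c d) (X c d (F a b x)) + ad_terms X a b c d x)"

lemma ad_covariantD:
  "ad_covariant X \<Longrightarrow> a \<in> Iset N \<Longrightarrow> b \<in> Iset N \<Longrightarrow> c \<in> Iset N \<Longrightarrow> d \<in> Iset N \<Longrightarrow>
   F a b (X c d x) = sc (comm_sign a b c d) (X c d (F a b x)) + ad_terms X a b c d x"
  by (simp add: ad_covariant_def)

lemma ad_covariant_F: "ad_covariant F"
  using qN_rep unfolding ad_covariant_def ad_terms_def is_qN_rep_def comm_sign_def Let_def
  by (simp add: algebra_simps)

definition F_mult :: "(int \<Rightarrow> int \<Rightarrow> 'v \<Rightarrow> 'v) \<Rightarrow> int \<Rightarrow> int \<Rightarrow> 'v \<Rightarrow> 'v" where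
  "F_mult X c d x = (\<Sum>k\<in>Iset N. F c k (sc (par_sign k) (X k d x)))"

lemma Cop_Suc_Suc: "Cop N sc F (Suc (Suc n)) = F_mult (Cop N sc F (Suc n))"
  by (simp add: fun_eq_iff F_mult_def par_sign_def)

(* Super Leibniz rule: [F_ab, F_ck Y] = [F_ab, F_ck] Y + (sign) F_ck [F_ab, Y]. *)
lemma F_F_mult_summand:
  assumes X: "ad_covariant X" and abcd: "a \<in> Iset N" "b \<in> Iset N" "c \<in> Iset N" "d \<in> Iset N"
    and k: "k \<in> Iset N"
  shows "F a b (F c k (sc (par_sign k) (X k d x))) =
      sc (comm_sign a b c d) (F c k (sc (par_sign k) (X k d (F a b x))))
    + sc (comm_sign a b c k * par_sign k) (F c k (ad_terms X a b k d x))
    + ad_terms F a b c k (sc (par_sign k) (X k d x))"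
proof -
  let ?y = "sc (par_sign k) (X k d x)"
  have Fy: "F a b ?y =
      sc (par_sign k) (sc (comm_sign a b k d) (X k d (F a b x)) + ad_terms X a b k d x)"
    using abcd k by (simp add: F_scale ad_covariantD[OF X])
  have "F a b (F c k ?y) = sc (comm_sign a b c k) (F c k (F a b ?y)) + ad_terms F a b c k ?y"
    using abcd(1-3) k by (rule ad_covariantD[OF ad_covariant_F])
  also have "sc (comm_sign a b c k) (F c k (F a b ?y)) =
      sc (comm_sign a b c d) (F c k (sc (par_sign k) (X k d (F a b x))))
    + sc (comm_sign a b c k * par_sign k) (F c k (ad_terms X a b k d x))"
    unfolding Fy using abcd k
    by (simp add: F_add F_scale vs.scale_right_distrib flip: comm_sign_mult[of a b c k d])
  finally show ?thesis .
qed

lemma sum_F_ad_terms: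
  assumes abcd: "a \<in> Iset N" "b \<in> Iset N" "c \<in> Iset N" "d \<in> Iset N"
  shows "(\<Sum>k\<in>Iset N. sc (comm_sign a b c k * par_sign k) (F c k (ad_terms X a b k d x))) =
      sc (comm_sign a b c b * par_sign b) (F c b (X a d x))
    + sc (comm_sign a b c (-b) * par_sign (-b)) (F c (-b) (X (-a) d x))
    - sc (comm_sign a b c d) (if a = d then F_mult X c b x else 0)
    - sc (comm_sign a b c d) (if -a = d then F_mult X c (-b) x else 0)"
proof -
  have summand: "sc (comm_sign a b c k * par_sign k) (F c k (ad_terms X a b k d x)) =
      (if k = b then sc (comm_sign a b c b * par_sign b) (F c b (X a d x)) else 0)
    + (if k = -b then sc (comm_sign a b c (-b) * par_sign (-b)) (F c (-b) (X (-a) d x)) else 0)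
    - sc (comm_sign a b c d) (if a = d then F c k (sc (par_sign k) (X k b x)) else 0)
    - sc (comm_sign a b c d) (if -a = d then F c k (sc (par_sign k) (X k (-b) x)) else 0)"
    if k: "k \<in> Iset N" for k
    using abcd k
    by (simp add: ad_terms_def F_add F_diff F_scale F_zero vs.scale_right_distrib
        vs.scale_right_diff_distrib mult_ac flip: comm_sign_mult[of a b c k d])
  show ?thesis
    using abcd
    by (simp add: sum.cong[OF refl summand] sum.distrib sum_subtractf F_mult_def
        vs.scale_sum_right[symmetric])
qed

lemma sum_ad_terms_F:
  assumes abcd: "a \<in> Iset N" "b \<in> Iset N" "c \<in> Iset N" "d \<in> Iset N"
  shows "(\<Sum>k\<in>Iset N. ad_terms F a b c k (sc (par_sign k) (X k d x))) =
      (if c = b then F_mult X a d x else 0) + (if c = -b then F_mult X (-a) d x else 0)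
    - sc (comm_sign a b c a * par_sign a) (F c b (X a d x))
    - sc (comm_sign a b c (-a) * par_sign (-a)) (F c (-b) (X (-a) d x))"
proof -
  have summand: "ad_terms F a b c k (sc (par_sign k) (X k d x)) =
      (if c = b then F a k (sc (par_sign k) (X k d x)) else 0)
    + (if c = -b then F (-a) k (sc (par_sign k) (X k d x)) else 0)
    - (if k = a then sc (comm_sign a b c a * par_sign a) (F c b (X a d x)) else 0)
    - (if k = -a then sc (comm_sign a b c (-a) * par_sign (-a)) (F c (-b) (X (-a) d x)) else 0)"
    if k: "k \<in> Iset N" for k
    using abcd k by (auto simp: ad_terms_def F_scale)
  show ?thesis
    using abcd
    by (simp add: sum.cong[OF refl summand] sum.distrib sum_subtractf F_mult_def)
qed

lemma ad_covariant_F_mult: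
  assumes X: "ad_covariant X"
  shows "ad_covariant (F_mult X)"
  unfolding ad_covariant_def
proof (intro ballI allI)
  fix a b c d x assume abcd: "a \<in> Iset N" "b \<in> Iset N" "c \<in> Iset N" "d \<in> Iset N"
  have "F a b (F_mult X c d x) = (\<Sum>k\<in>Iset N. F a b (F c k (sc (par_sign k) (X k d x))))"
    using abcd by (simp add: F_mult_def F_sum)
  also have "\<dots> = sc (comm_sign a b c d) (F_mult X c d (F a b x))
    + (\<Sum>k\<in>Iset N. sc (comm_sign a b c k * par_sign k) (F c k (ad_terms X a b k d x)))
    + (\<Sum>k\<in>Iset N. ad_terms F a b c k (sc (par_sign k) (X k d x)))"
    using abcd
    by (simp add: F_F_mult_summand[OF X] sum.distrib F_mult_def vs.scale_sum_right)
  also have "\<dots> = sc (comm_sign a b c d) (F_mult X c d (F a b x)) + ad_terms (F_mult X) a b c d x"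
    \<comment> \<open>the terms k = b, -b of the first sum cancel the terms k = a, -a of the second\<close>
    unfolding sum_F_ad_terms[OF abcd] sum_ad_terms_F[OF abcd] unfolding ad_terms_def
    using abcd comm_sign_par_sign_flip[OF Iset_nonzero Iset_nonzero, OF abcd(1,2)] by simp
  finally show "F a b (F_mult X c d x) =
      sc (comm_sign a b c d) (F_mult X c d (F a b x)) + ad_terms (F_mult X) a b c d x" .
qed

lemma ad_covariant_Cop: "ad_covariant (Cop N sc F (Suc n))"
proof (induction n)
  case 0
  have "Cop N sc F (Suc 0) = F" by (simp add: fun_eq_iff)
  then show ?case by (simp add: ad_covariant_F)
next
  case (Suc n)
  then show ?case by (simp add: Cop_Suc_Suc ad_covariant_F_mult)
qed

lemma Cop_scale:
  "a \<in> Iset N \<Longrightarrow> b \<in> Iset N \<Longrightarrow> Cop N sc F (Suc n) a b (sc r x) = sc r (Cop N sc F (Suc n) a b x)"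
proof (induction n arbitrary: a b x)
  case 0
  then show ?case by (simp add: F_scale)
next
  case (Suc n)
  then show ?case
    by (simp add: Cop_Suc_Suc F_mult_def vs.scale_sum_right F_scale mult.commute)
qed

lemma Cop_zero: "a \<in> Iset N \<Longrightarrow> b \<in> Iset N \<Longrightarrow> Cop N sc F (Suc n) a b 0 = 0"
  using Cop_scale[of a b n 0 0] by simp

lemma Cop_uminus_uminus:
  "c \<in> Iset N \<Longrightarrow> d \<in> Iset N \<Longrightarrow>
   Cop N sc F (Suc n) (-c) (-d) x = sc ((-1) ^ n) (Cop N sc F (Suc n) c d x)"
proof (induction n arbitrary: c d x)
  case 0
  then show ?case by (simp add: F_uminus_uminus)
next
  case (Suc n)
  have "Cop N sc F (Suc (Suc n)) (-c) (-d) x =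
      (\<Sum>k\<in>Iset N. F (-c) (-k) (sc (par_sign (-k)) (Cop N sc F (Suc n) (-k) (-d) x)))"
    unfolding Cop_Suc_Suc F_mult_def by (rule sum_Iset_reflect)
  also have "\<dots> = (\<Sum>k\<in>Iset N. sc ((-1) ^ Suc n) (F c k (sc (par_sign k) (Cop N sc F (Suc n) k d x))))"
    using Suc by (intro sum.cong refl)
      (simp add: F_uminus_uminus par_sign_uminus Iset_nonzero F_scale F_neg mult.commute)
  also have "\<dots> = sc ((-1) ^ Suc n) (Cop N sc F (Suc (Suc n)) c d x)"
    by (simp add: Cop_Suc_Suc F_mult_def vs.scale_sum_right)
  finally show ?case .
qed

end

locale qN_highest_weight_vector = qN_representation +
  fixes v and lam :: "int \<Rightarrow> complex"
  assumes raising_vanish: "\<And>a b. a \<in> Iset N \<Longrightarrow> b \<in> Iset N \<Longrightarrow> \<bar>a\<bar> < \<bar>b\<bar> \<Longrightarrow> F a b v = 0"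
    and weight: "\<And>a. a \<in> {1..int N} \<Longrightarrow> F a a v = sc (lam a) v"
begin

lemma Cop_raising_vanish:
  "a \<in> Iset N \<Longrightarrow> b \<in> Iset N \<Longrightarrow> \<bar>a\<bar> < \<bar>b\<bar> \<Longrightarrow> Cop N sc F (Suc n) a b v = 0"
proof (induction n arbitrary: a b)
  case 0
  then show ?case by (simp add: raising_vanish)
next
  case (Suc n)
  have "F a k (sc (par_sign k) (Cop N sc F (Suc n) k b v)) = 0" if k: "k \<in> Iset N" for k
  proof (cases "\<bar>k\<bar> < \<bar>b\<bar>")
    case True
    then show ?thesis using Suc k by (simp add: F_zero)
  next
    case False
    then have "\<bar>a\<bar> < \<bar>k\<bar>" "a \<noteq> b" "-a \<noteq> b" using Suc.prems by auto
    then have "F a k (Cop N sc F (Suc n) k b v) = 0"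
      using Suc k Iset_nonzero[OF k]
      by (simp add: ad_covariantD[OF ad_covariant_Cop] ad_terms_def raising_vanish Cop_zero)
    then show ?thesis using Suc.prems k by (simp add: F_scale)
  qed
  then show ?case by (simp add: Cop_Suc_Suc F_mult_def)
qed

lemma F_Cop_weight:
  assumes i: "i \<in> {1..int N}"
  shows "F i i (Cop N sc F (Suc n) i i v) = sc (lam i) (Cop N sc F (Suc n) i i v)"
proof -
  have "i \<in> Iset N" "i \<noteq> -i" using i by (auto simp: Iset_def)
  then show ?thesis
    by (simp add: ad_covariantD[OF ad_covariant_Cop] ad_terms_def comm_sign_same weight[OF i] Cop_scale)
qed

lemma F_Cop_raising:
  assumes "i \<in> Iset N" "k \<in> Iset N" "\<bar>i\<bar> < \<bar>k\<bar>"
  shows "F i k (Cop N sc F (Suc n) k i v) =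
    Cop N sc F (Suc n) i i v - sc (par_sign i * par_sign k) (Cop N sc F (Suc n) k k v)"
  using assms Iset_nonzero[of i N] Iset_nonzero[of k N]
  by (simp add: ad_covariantD[OF ad_covariant_Cop] ad_terms_def raising_vanish Cop_zero comm_sign_swap)

lemma F_Cop_column_summand:
  assumes i: "i \<in> {1..int N}" and k: "k \<in> Iset N"
  shows "F i k (sc (par_sign k) (Cop N sc F (Suc n) k i v)) =
      (if k = i then sc (lam i) (Cop N sc F (Suc n) i i v) else 0)
    - (if k = -i then F (-i) i (Cop N sc F (Suc n) (-i) i v) else 0)
    + (if i < \<bar>k\<bar> then sc (par_sign k) (Cop N sc F (Suc n) i i v) - Cop N sc F (Suc n) k k v else 0)"
proof -
  have iI: "i \<in> Iset N" "-i \<in> Iset N" and ipos: "i > 0" using i by (auto simp: Iset_def)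
  consider "k = i" | "k = -i" | "\<bar>k\<bar> < i" | "i < \<bar>k\<bar>" by linarith
  then show ?thesis
  proof cases
    case 1
    then show ?thesis using iI i by (simp add: F_Cop_weight par_sign_pos)
  next
    case 2
    then show ?thesis
      using iI ipos by (simp add: F_uminus_uminus[of i "-i", simplified] par_sign_uminus par_sign_pos F_neg)
  next
    case 3
    then show ?thesis using iI k ipos by (simp add: Cop_raising_vanish F_zero)
  next
    case 4
    then have "k \<noteq> i" "k \<noteq> -i" using ipos by auto
    with 4 show ?thesis
      using iI k ipos
      by (simp add: F_scale F_Cop_raising par_sign_pos vs.scale_right_diff_distrib
          par_sign_mult_self[of k] flip: mult.assoc)
  qed
qed

end

theorem mainTheorem6:
  fixes N :: nat
    and sc :: "complex \<Rightarrow> 'v::ab_group_add \<Rightarrow> 'v"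
    and F :: "int \<Rightarrow> int \<Rightarrow> 'v \<Rightarrow> 'v"
    and lam :: "int \<Rightarrow> complex"
    and v :: 'v
    and m :: nat and i :: int
  assumes "N \<ge> 1"
    and rep: "is_qN_rep N sc F"
    and hw: "\<And>a b. a \<in> Iset N \<Longrightarrow> b \<in> Iset N \<Longrightarrow> \<bar>a\<bar> < \<bar>b\<bar> \<Longrightarrow> F a b v = 0"
    and wt: "\<And>a. a \<in> {1..int N} \<Longrightarrow> F a a v = sc (lam a) v"
    and "m \<ge> 1"
    and "i \<in> {1..int N}"
  shows "Cop N sc F (2*m+1) i i v
           = sc (lam i) (Cop N sc F (2*m) i i v) - F (-i) i (Cop N sc F (2*m) (-i) i v)"
proof -
  interpret qN_highest_weight_vector N sc F v lam
    using rep hw wt by unfold_locales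
  obtain n where n: "2 * m = Suc n" and "odd n"
    using \<open>m \<ge> 1\<close> by (intro that[of "2 * m - 1"]) presburger+
  let ?C = "Cop N sc F (Suc n)"
  define h where "h k = (if i < \<bar>k\<bar> then sc (par_sign k) (?C i i v) - ?C k k v else 0)" for k
  have h_sum: "(\<Sum>k\<in>Iset N. h k) = 0"
    by (rule sum_Iset_odd)
      (use \<open>odd n\<close> in \<open>simp add: h_def Cop_uminus_uminus par_sign_uminus Iset_nonzero\<close>)
  have iI: "i \<in> Iset N"
    using \<open>i \<in> {1..int N}\<close> by (simp add: Iset_def)
  have "Cop N sc F (Suc (Suc n)) i i v = (\<Sum>k\<in>Iset N. F i k (sc (par_sign k) (?C k i v)))"
    by (simp add: Cop_Suc_Suc F_mult_def)
  also have "\<dots> = (\<Sum>k\<in>Iset N. (if k = i then sc (lam i) (?C i i v) else 0)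
      - (if k = -i then F (-i) i (?C (-i) i v) else 0) + h k)"
    using \<open>i \<in> {1..int N}\<close> by (intro sum.cong refl) (simp add: F_Cop_column_summand h_def)
  also have "\<dots> = sc (lam i) (?C i i v) - F (-i) i (?C (-i) i v)"
    using iI h_sum by (simp add: sum.distrib sum_subtractf)
  finally show ?thesis
    by (simp add: n)
qed

end
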